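(* Let $n\ge 2$ and $\alpha=\pi/4$. For all $u,v\in\mathrm{Sym}(n)$, if $u<_B v$ then $\mathrm{B}^{\pi/4}_n(u)\prec \mathrm{B}^{\pi/4}_n(v)$.
   Context: $\mathrm{Sym}(n)$ is the group of permutations of $\{1,\dots,n\}$, written on the right: $(i)w$ is the image of $i$ under $w$, and $uv$ means "first $u$, then $v$". It is a Coxeter group with generators $s_i=(i,i+1)$, length function $\ell$, and set of reflections $T$ = all transpositions. The Bruhat order $<_B$ is the transitive closure of the relation $w<_B wt$ for $t\in T$ with $\ell(wt)=\ell(w)+1$. Borders: fix $n\ge2$ and $\alpha\in(0,\pi/2)$. For $k=1,\dots,n$ let $\theta_k=\frac{(k-1)(\pi-2\alpha)}{n-1}+\alpha$ and $\beta^k_n=(-\cos\theta_k,\ \sin\theta_k)\in\mathbb{R}^2$. For $w\in\mathrm{Sym}(n)$ and $i=0,\dots,n$ put $p_i(w)=\sum_{j=1}^{i}\beta_n^{(j)w^{-1}}$ (so $p_0(w)=0$). The border $\mathrm{B}^\alpha_n(w)$ is the polygonal path $\bigcup_{i=1}^n[p_{i-1}(w),p_i(w)]$ (its $i$-th edge being the segment $[p_{i-1}(w),p_i(w)]$). Since every $\beta^k_n$ has positive $y$-coordinate, the $y$-coordinate is strictly increasing along the path from $0$ to $h^\alpha_n=\sum_{k=1}^n\sin\theta_k$, so for each $y\in[0,h^\alpha_n]$ there is a unique point of $\mathrm{B}^\alpha_n(w)$ with $y$-coordinate $y$; denote its $x$-coordinate by $\mathrm{H}(\mathrm{B}^\alpha_n(w),y)$.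 For $u,v\in\mathrm{Sym}(n)$ we write $\mathrm{B}^\alpha_n(u)\prec\mathrm{B}^\alpha_n(v)$ ("precedes") if $\mathrm{H}(\mathrm{B}^\alpha_n(u),y)\le \mathrm{H}(\mathrm{B}^\alpha_n(v),y)$ for all $0\le y\le h^\alpha_n$. *)

theory Defs
  imports "HOL-Analysis.Analysis" "HOL-Combinatorics.Permutations"
begin

text \<open>Elements of Sym(n) are functions nat => nat that permute {1..n}.
  Permutations act on the right: (i)w = w i, and uv ("first u, then v") is the
  function v o u.\<close>

definition sgen :: "nat \<Rightarrow> nat \<Rightarrow> nat" where
  "sgen i = Transposition.transpose i (Suc i)"

fun word_perm :: "nat list \<Rightarrow> (nat \<Rightarrow> nat)" where
  "word_perm [] = id"
| "word_perm (i # is) = word_perm is \<circ> sgen i"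

definition cox_len :: "nat \<Rightarrow> (nat \<Rightarrow> nat) \<Rightarrow> nat" where
  "cox_len n w = (LEAST k. \<exists>xs. length xs = k \<and> set xs \<subseteq> {1..<n} \<and> word_perm xs = w)"

text \<open>w <_B wt for a transposition t with l(wt) = l(w)+1; (i)(wt) = t((i)w).\<close>
definition bruhat_step :: "nat \<Rightarrow> (nat \<Rightarrow> nat) \<Rightarrow> (nat \<Rightarrow> nat) \<Rightarrow> bool" where
  "bruhat_step n w w' \<longleftrightarrow>
     (\<exists>a b. a \<in> {1..n} \<and> b \<in> {1..n} \<and> a \<noteq> b \<and>
        w' = Transposition.transpose a b \<circ> w \<and> cox_len n w' = cox_len n w + 1)"

definition bruhat_less :: "nat \<Rightarrow> (nat \<Rightarrow> nat) \<Rightarrow> (nat \<Rightarrow> nat) \<Rightarrow> bool" where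
  "bruhat_less n = (bruhat_step n)\<^sup>+\<^sup>+"

definition theta :: "nat \<Rightarrow> real \<Rightarrow> nat \<Rightarrow> real" where
  "theta n \<alpha> k = real (k - 1) * (pi - 2 * \<alpha>) / real (n - 1) + \<alpha>"

definition beta :: "nat \<Rightarrow> real \<Rightarrow> nat \<Rightarrow> real \<times> real" where
  "beta n \<alpha> k = (- cos (theta n \<alpha> k), sin (theta n \<alpha> k))"

definition bpt :: "nat \<Rightarrow> real \<Rightarrow> (nat \<Rightarrow> nat) \<Rightarrow> nat \<Rightarrow> real \<times> real" where
  "bpt n \<alpha> w i = (\<Sum>j = 1..i. beta n \<alpha> (inv w j))"

definition border :: "nat \<Rightarrow> real \<Rightarrow> (nat \<Rightarrow> nat) \<Rightarrow> (real \<times> real) set" where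
  "border n \<alpha> w = (\<Union>i \<in> {1..n}. closed_segment (bpt n \<alpha> w (i - 1)) (bpt n \<alpha> w i))"

definition height :: "nat \<Rightarrow> real \<Rightarrow> real" where
  "height n \<alpha> = (\<Sum>k = 1..n. sin (theta n \<alpha> k))"

definition Hx :: "(real \<times> real) set \<Rightarrow> real \<Rightarrow> real" where
  "Hx B y = (THE x. (x, y) \<in> B)"

definition precedes :: "nat \<Rightarrow> real \<Rightarrow> (nat \<Rightarrow> nat) \<Rightarrow> (nat \<Rightarrow> nat) \<Rightarrow> bool" where
  "precedes n \<alpha> u v \<longleftrightarrow>
     (\<forall>y. 0 \<le> y \<and> y \<le> height n \<alpha> \<longrightarrow> Hx (border n \<alpha> u) y \<le> Hx (border n \<alpha> v) y)"

end

theory Submission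
  imports Defs
begin

text \<open>
  A Bruhat step w < (a b) w with a < b goes up in length exactly when inv w a < inv w b, since
  the Coxeter length is the number of inversions. On borders, the step exchanges the edges in
  positions a and b, whose directions are \<beta> k and \<beta> m with k < m. For \<alpha> = \<pi>/4 every edge is
  within 45 degrees of the vertical, so a border is the graph of a 1-Lipschitz function of the
  height; moreover \<beta> m is clockwise from \<beta> k, and \<beta> m - \<beta> k points to the right within 45
  degrees of the horizontal. Together these force every point of the new border to lie weakly to
  the right of the old one, and the relation is transitive along Bruhat chains.
\<close>

hide_const (open) Finite_Cartesian_Product.transpose

section \<open>Coxeter length as the number of inversions\<close>

definition inversions :: "nat \<Rightarrow> (nat \<Rightarrow> nat) \<Rightarrow> (nat \<times> nat) set" where
  "inversions n f = {(i, j). i \<in> {1..n} \<and> j \<in> {1..n} \<and> i < j \<and> f j < f i}"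

lemma finite_inversions [simp]: "finite (inversions n f)"
  by (rule finite_subset[of _ "{1..n} \<times> {1..n}"]) (auto simp: inversions_def)

lemma card_inversions_comp_sgen_le:
  assumes "i \<in> {1..<n}"
  shows "card (inversions n (f \<circ> sgen i)) \<le> card (inversions n f) + 1"
proof -
  let ?s = "sgen i"
  let ?m = "map_prod ?s ?s"
  have "inversions n (f \<circ> ?s) \<subseteq> insert (i, Suc i) (?m ` inversions n f)"
  proof
    fix x assume x: "x \<in> inversions n (f \<circ> ?s)"
    obtain j k where jk: "x = (j, k)" by (cases x)
    show "x \<in> insert (i, Suc i) (?m ` inversions n f)"
    proof (cases "x = (i, Suc i)")
      case False
      have "(?s j, ?s k) \<in> inversions n f"
        using x False assms unfolding jk inversions_def sgen_def
        by (auto simp: Transposition.transpose_def split: if_splits)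
      moreover have "x = ?m (?s j, ?s k)" by (simp add: jk sgen_def)
      ultimately show ?thesis by blast
    qed simp
  qed
  then have "card (inversions n (f \<circ> ?s)) \<le> card (insert (i, Suc i) (?m ` inversions n f))"
    by (intro card_mono) simp_all
  also have "\<dots> \<le> card (?m ` inversions n f) + 1"
    by (simp add: card_insert_if)
  also have "\<dots> \<le> card (inversions n f) + 1"
    using card_image_le[OF finite_inversions] by simp
  finally show ?thesis .
qed

text \<open>\<phi> maps the inversions of f \<circ> (p q) injectively to inversions of f other than (p, q).\<close>
lemma card_inversions_comp_transpose_less:
  assumes pq: "p \<in> {1..n}" "q \<in> {1..n}" "p < q" and f: "f q < f p"
  shows "card (inversions n (f \<circ> transpose p q)) < card (inversions n f)"
proof -
  let ?t = "transpose p q"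
  define \<phi> where "\<phi> = (\<lambda>(i, j). if ?t i < ?t j then (?t i, ?t j) else (i, j))"
  have "inj_on \<phi> (inversions n (f \<circ> ?t))"
  proof (rule inj_onI)
    fix x y assume "x \<in> inversions n (f \<circ> ?t)" "y \<in> inversions n (f \<circ> ?t)" "\<phi> x = \<phi> y"
    then show "x = y"
      by (cases x, cases y)
        (auto simp: \<phi>_def inversions_def Transposition.transpose_def split: if_splits)
  qed
  moreover have "\<phi> ` inversions n (f \<circ> ?t) \<subseteq> inversions n f - {(p, q)}"
  proof
    fix z assume "z \<in> \<phi> ` inversions n (f \<circ> ?t)"
    then obtain i j where "(i, j) \<in> inversions n (f \<circ> ?t)" "z = \<phi> (i, j)" by auto
    then show "z \<in> inversions n f - {(p, q)}"
      using pq f by (auto simp: \<phi>_def inversions_def Transposition.transpose_def split: if_splits)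
  qed
  ultimately have "card (inversions n (f \<circ> ?t)) \<le> card (inversions n f - {(p, q)})"
    by (intro card_inj_on_le) simp_all
  moreover have "(p, q) \<in> inversions n f" using pq f by (auto simp: inversions_def)
  then have "card (inversions n f - {(p, q)}) < card (inversions n f)"
    by (intro card_Diff1_less) simp_all
  ultimately show ?thesis by linarith
qed

lemma permutes_ascending_eq_id:
  assumes w: "w permutes {1..n}" and asc: "\<And>i. i \<in> {1..<n} \<Longrightarrow> w i < w (Suc i)"
  shows "w = id"
proof (rule permutes_natset_ge[OF w], intro ballI)
  fix i :: nat assume "i \<in> {1..n}"
  then show "i \<le> w i"
  proof (induction i)
    case (Suc i)
    show ?case
    proof (cases "i = 0")
      case True
      then show ?thesis using permutes_in_image[OF w] Suc.prems by auto
    next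
      case False
      then have "i \<le> w i" using Suc by simp
      moreover have "w i < w (Suc i)" using asc False Suc.prems by simp
      ultimately show ?thesis by simp
    qed
  qed simp
qed

lemma sgen_permutes: "i \<in> {1..<n} \<Longrightarrow> sgen i permutes {1..n}"
  unfolding sgen_def by (rule permutes_swap_id) auto

lemma word_perm_inversions:
  assumes "w permutes {1..n}"
  obtains xs where "set xs \<subseteq> {1..<n}" "word_perm xs = w" "length xs \<le> card (inversions n w)"
  using assms
proof (induction "card (inversions n w)" arbitrary: w thesis rule: less_induct)
  case less
  show ?case
  proof (cases "\<exists>i\<in>{1..<n}. w (Suc i) < w i")
    case True
    then obtain i where i: "i \<in> {1..<n}" "w (Suc i) < w i" by blast
    let ?w = "w \<circ> sgen i"
    have fewer: "card (inversions n ?w) < card (inversions n w)"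
      using card_inversions_comp_transpose_less[of i n "Suc i" w] i by (auto simp: sgen_def)
    moreover have "?w permutes {1..n}"
      using less.prems(2) sgen_permutes[OF i(1)] by (rule permutes_compose[rotated])
    ultimately obtain xs where xs: "set xs \<subseteq> {1..<n}" "word_perm xs = ?w"
      "length xs \<le> card (inversions n ?w)"
      using less.hyps by blast
    have "word_perm (i # xs) = w"
      using xs(2) by (auto simp: fun_eq_iff sgen_def)
    then show ?thesis using xs i fewer by (intro less.prems(1)[of "i # xs"]) auto
  next
    case False
    have "w i < w (Suc i)" if "i \<in> {1..<n}" for i
      using False that permutes_inj[OF less.prems(2)]
      by (metis linorder_neqE_nat n_not_Suc_n injD)
    then have "w = id" by (rule permutes_ascending_eq_id[OF less.prems(2)])
    then show ?thesis by (intro less.prems(1)[of "[]"]) simp_all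
  qed
qed

lemma card_inversions_word_perm_le:
  "set xs \<subseteq> {1..<n} \<Longrightarrow> card (inversions n (word_perm xs)) \<le> length xs"
proof (induction xs)
  case Nil
  have "inversions n (word_perm []) = {}" by (auto simp: inversions_def)
  then show ?case by (simp only: card.empty)
next
  case (Cons i xs)
  have "card (inversions n (word_perm (i # xs))) \<le> card (inversions n (word_perm xs)) + 1"
    using Cons.prems card_inversions_comp_sgen_le[of i n] by simp
  also have "\<dots> \<le> length (i # xs)"
    using Cons by simp
  finally show ?case .
qed

lemma cox_len_eq_card_inversions:
  assumes "w permutes {1..n}"
  shows "cox_len n w = card (inversions n w)"
proof -
  let ?P = "\<lambda>k. \<exists>xs. length xs = k \<and> set xs \<subseteq> {1..<n} \<and> word_perm xs = w"
  obtain xs where xs: "set xs \<subseteq> {1..<n}" "word_perm xs = w" "length xs \<le> card (inversions n w)"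
    using word_perm_inversions[OF assms] .
  have "cox_len n w \<le> length xs"
    unfolding cox_len_def using xs by (intro Least_le) blast
  then have "cox_len n w \<le> card (inversions n w)" using xs(3) by linarith
  moreover obtain ys where "length ys = cox_len n w" "set ys \<subseteq> {1..<n}" "word_perm ys = w"
    using LeastI[of ?P "length xs"] xs unfolding cox_len_def by blast
  then have "card (inversions n w) \<le> cox_len n w"
    using card_inversions_word_perm_le by metis
  ultimately show ?thesis by simp
qed

text \<open>A Bruhat step w < t w multiplies by a transposition t = (a b) whose values a < b
  are not inverted by w: otherwise t w = w (p q) with (p, q) an inversion of w, and the length
  would drop.\<close>
lemma bruhat_step_obtains_transpose:
  assumes w: "w permutes {1..n}" and step: "bruhat_step n w w'"
  obtains a b where "a \<in> {1..n}" "b \<in> {1..n}" "a < b" "w' = transpose a b \<circ> w"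
    "inv w a < inv w b"
proof -
  obtain a0 b0 where ab0: "a0 \<in> {1..n}" "b0 \<in> {1..n}" "a0 \<noteq> b0"
    and w': "w' = transpose a0 b0 \<circ> w" and len: "cox_len n w' = cox_len n w + 1"
    using step unfolding bruhat_step_def by blast
  define a where "a = min a0 b0"
  define b where "b = max a0 b0"
  have ab: "a \<in> {1..n}" "b \<in> {1..n}" "a < b" using ab0 by (auto simp: a_def b_def)
  have w'_ab: "w' = transpose a b \<circ> w"
    using w' by (cases "a0 \<le> b0") (auto simp: a_def b_def transpose_commute)
  have "\<not> inv w b < inv w a"
  proof
    assume lt: "inv w b < inv w a"
    have inv_in: "inv w a \<in> {1..n}" "inv w b \<in> {1..n}"
      using ab permutes_in_image[OF permutes_inv[OF w]] by auto
    have vals: "w (inv w a) = a" "w (inv w b) = b"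
      using permutes_inverses(1)[OF w] by auto
    have "w' = w \<circ> transpose (inv w b) (inv w a)"
      using w'_ab transpose_comp_eq[OF permutes_bij[OF w]] by (simp add: transpose_commute)
    then have "card (inversions n w') < card (inversions n w)"
      using card_inversions_comp_transpose_less[OF inv_in(2,1) lt] vals ab(3) by simp
    moreover have "w' permutes {1..n}"
      unfolding w'_ab using ab by (intro permutes_compose[OF w] permutes_swap_id) auto
    ultimately have "cox_len n w' < cox_len n w"
      using cox_len_eq_card_inversions[OF w] cox_len_eq_card_inversions[of w'] by simp
    then show False using len by simp
  qed
  moreover have "inv w a \<noteq> inv w b"
    using ab(3) permutes_inj[OF permutes_inv[OF w]] by (auto dest: injD)
  ultimately show ?thesis using that ab w'_ab by simp
qed

section \<open>Polylines with steep edges\<close>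

definition steep :: "real \<times> real \<Rightarrow> bool" where
  "steep d \<longleftrightarrow> \<bar>fst d\<bar> \<le> snd d"

lemma steep_add: "steep d \<Longrightarrow> steep d' \<Longrightarrow> steep (d + d')"
  by (auto simp: steep_def)

lemma steep_scaleR: "steep d \<Longrightarrow> 0 \<le> c \<Longrightarrow> steep (c *\<^sub>R d)"
  by (auto simp: steep_def abs_mult intro: mult_left_mono)

definition vertex :: "(nat \<Rightarrow> real \<times> real) \<Rightarrow> nat \<Rightarrow> real \<times> real" where
  "vertex e i = (\<Sum>j = 1..i. e j)"

definition polyline :: "nat \<Rightarrow> (nat \<Rightarrow> real \<times> real) \<Rightarrow> (real \<times> real) set" where
  "polyline n e = (\<Union>i \<in> {1..n}. closed_segment (vertex e (i - 1)) (vertex e i))"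

lemma vertex_0 [simp]: "vertex e 0 = 0"
  by (simp add: vertex_def)

lemma vertex_Suc: "vertex e (Suc i) = vertex e i + e (Suc i)"
  by (simp add: vertex_def)

lemma vertex_pred: "1 \<le> i \<Longrightarrow> vertex e i = vertex e (i - 1) + e i"
  using vertex_Suc[of e "i - 1"] by simp

lemma mem_polyline_iff:
  "z \<in> polyline n e \<longleftrightarrow> (\<exists>i\<in>{1..n}. \<exists>u\<in>{0..1}. z = vertex e (i - 1) + u *\<^sub>R e i)"
proof -
  have "closed_segment (vertex e (i - 1)) (vertex e i) = (\<lambda>u. vertex e (i - 1) + u *\<^sub>R e i) ` {0..1}"
    if "1 \<le> i" for i
    using vertex_pred[OF that, of e] by (auto simp: closed_segment_def algebra_simps)
  then show ?thesis by (auto simp: polyline_def)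
qed

lemma polyline_memI:
  "i \<in> {1..n} \<Longrightarrow> u \<in> {0..1} \<Longrightarrow> vertex e (i - 1) + u *\<^sub>R e i \<in> polyline n e"
  unfolding mem_polyline_iff by blast

lemma steep_vertex_diff:
  assumes edges: "\<And>j. j \<in> {1..n} \<Longrightarrow> steep (e j)" and "i \<le> k" "k \<le> n"
  shows "steep (vertex e k - vertex e i)"
  using assms(2,3)
proof (induction k)
  case (Suc k)
  show ?case
  proof (cases "i = Suc k")
    case False
    then have "steep (vertex e k - vertex e i + e (Suc k))"
      using Suc edges by (intro steep_add) auto
    then show ?thesis by (simp add: vertex_Suc algebra_simps)
  qed (simp add: steep_def)
qed (simp add: steep_def)

lemma steep_polyline_diff_ordered:
  assumes edges: "\<And>j. j \<in> {1..n} \<Longrightarrow> steep (e j)"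
    and ij: "1 \<le> i" "i \<le> j" "j \<le> n" and u: "u \<in> {0..1}" and v: "v \<in> {0..1}"
    and before: "i < j \<or> u \<le> v"
  shows "steep ((vertex e (j - 1) + v *\<^sub>R e j) - (vertex e (i - 1) + u *\<^sub>R e i))"
proof (cases "i < j")
  case True
  have "steep (vertex e (j - 1) - vertex e i)"
    using True ij by (intro steep_vertex_diff[OF edges]) auto
  moreover have "steep ((1 - u) *\<^sub>R e i)" "steep (v *\<^sub>R e j)"
    using ij u v by (auto intro!: steep_scaleR edges)
  ultimately have "steep ((vertex e (j - 1) - vertex e i) + (1 - u) *\<^sub>R e i + v *\<^sub>R e j)"
    by (intro steep_add)
  then show ?thesis using vertex_pred[OF ij(1), of e] by (simp add: algebra_simps)
next
  case False
  then have "i = j" "u \<le> v" using ij before by auto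
  then have "steep ((v - u) *\<^sub>R e i)" using ij edges by (intro steep_scaleR) auto
  then show ?thesis using \<open>i = j\<close> by (simp add: algebra_simps)
qed

lemma steep_polyline_lipschitz:
  assumes edges: "\<And>j. j \<in> {1..n} \<Longrightarrow> steep (e j)"
    and "p \<in> polyline n e" "q \<in> polyline n e"
  shows "\<bar>fst p - fst q\<bar> \<le> \<bar>snd p - snd q\<bar>"
proof -
  obtain i u where i: "i \<in> {1..n}" "u \<in> {0..1}" and p: "p = vertex e (i - 1) + u *\<^sub>R e i"
    using assms(2) unfolding mem_polyline_iff by blast
  obtain j v where j: "j \<in> {1..n}" "v \<in> {0..1}" and q: "q = vertex e (j - 1) + v *\<^sub>R e j"
    using assms(3) unfolding mem_polyline_iff by blast
  have "steep (q - p) \<or> steep (p - q)"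
  proof (cases "i < j \<or> (i = j \<and> u \<le> v)")
    case True
    then show ?thesis using steep_polyline_diff_ordered[of n e i j u v] edges i j p q by auto
  next
    case False
    then show ?thesis using steep_polyline_diff_ordered[of n e j i v u] edges i j p q by auto
  qed
  then show ?thesis by (auto simp: steep_def)
qed

lemma Hx_polyline_eq:
  assumes edges: "\<And>j. j \<in> {1..n} \<Longrightarrow> steep (e j)" and "(x, y) \<in> polyline n e"
  shows "Hx (polyline n e) y = x"
  unfolding Hx_def
  using assms(2) steep_polyline_lipschitz[OF edges assms(2)] by (intro the_equality) force+

lemma polyline_height_exists:
  assumes "1 \<le> n" "0 \<le> y" "y \<le> snd (vertex e n)"
  obtains x where "(x, y) \<in> polyline n e"
proof -
  define i where "i = (LEAST i. y \<le> snd (vertex e i))"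
  have y_le: "y \<le> snd (vertex e i)" and "i \<le> n"
    unfolding i_def using assms(3) by (auto intro: LeastI Least_le)
  show ?thesis
  proof (cases "i = 0")
    case True
    then have "(0, y) = vertex e (1 - 1) + 0 *\<^sub>R e 1" using y_le assms(2) by (simp add: zero_prod_def)
    then have "(0, y) \<in> polyline n e" using polyline_memI[of 1 n 0 e] assms(1) by simp
    then show ?thesis by (rule that)
  next
    case False
    then have y_gt: "snd (vertex e (i - 1)) < y"
      unfolding i_def by (metis diff_less i_def less_one not_less_Least not_gr_zero not_le)
    have vi: "vertex e i = vertex e (i - 1) + e i" using False vertex_pred by simp
    define u where "u = (y - snd (vertex e (i - 1))) / snd (e i)"
    have u: "u \<in> {0..1}" using y_gt y_le vi by (auto simp: u_def divide_simps)
    have "snd (vertex e (i - 1) + u *\<^sub>R e i) = y" using y_gt y_le vi by (simp add: u_def)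
    then have "(fst (vertex e (i - 1) + u *\<^sub>R e i), y) \<in> polyline n e"
      using polyline_memI[of i n u e] u False \<open>i \<le> n\<close>
      by (metis atLeastAtMost_iff less_one linorder_not_le prod.collapse)
    then show ?thesis by (rule that)
  qed
qed

lemma vertex_comp_transpose:
  assumes "1 \<le> a" "a < b"
  shows "vertex (e \<circ> transpose a b) j = vertex e j + (if a \<le> j \<and> j < b then e b - e a else 0)"
proof (induction j)
  case (Suc j)
  then show ?case
    using assms by (auto simp: vertex_Suc Transposition.transpose_def algebra_simps)
qed (use assms in simp)

text \<open>The witness is v = min 1 (s * snd P / snd R).\<close>
lemma scaled_difference_rightward:
  fixes P R :: "real \<times> real"
  assumes P: "\<bar>fst P\<bar> \<le> snd P" and R: "0 < snd R"
    and slope: "fst R * snd P \<le> fst P * snd R" and gap: "\<bar>snd P - snd R\<bar> \<le> fst P - fst R"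
    and s: "s \<in> {0..1}"
  obtains v where "v \<in> {0..1}" "\<bar>s * snd P - v * snd R\<bar> \<le> s * fst P - v * fst R"
proof (cases "s * snd P \<le> snd R")
  case True
  define v where "v = s * snd P / snd R"
  have "v \<in> {0..1}" using True P R s by (auto simp: v_def divide_simps)
  moreover have "s * snd P - v * snd R = 0" using R by (simp add: v_def)
  moreover have "v * fst R \<le> s * fst P"
  proof -
    have "v * fst R = s * (fst R * snd P) / snd R" by (simp add: v_def)
    also have "\<dots> \<le> s * fst P"
      using R mult_left_mono[OF slope, of s] s by (simp add: pos_divide_le_eq mult.assoc)
    finally show ?thesis .
  qed
  ultimately show ?thesis by (intro that[of v]) auto
next
  case False
  have "s * (snd P - fst P) \<le> snd P - fst P"
    using P s by (intro mult_left_le_one_le) auto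
  then have "s * snd P - snd R \<le> s * fst P - fst R"
    using gap by (simp add: right_diff_distrib abs_le_iff)
  then show ?thesis using False by (intro that[of 1]) auto
qed

lemma polyline_transpose_right_of:
  assumes edges: "\<And>j. j \<in> {1..n} \<Longrightarrow> steep (e j)" and ab: "1 \<le> a" "a < b" "b \<le> n"
    and pos: "0 < snd (e a)" "0 < snd (e b)"
    and slope: "fst (e a) * snd (e b) \<le> fst (e b) * snd (e a)"
    and gap: "\<bar>snd (e b) - snd (e a)\<bar> \<le> fst (e b) - fst (e a)"
    and g: "g \<in> polyline n (e \<circ> transpose a b)"
  shows "\<exists>p\<in>polyline n e. \<bar>snd g - snd p\<bar> \<le> fst g - fst p"
proof -
  define A B where "A = e a" and "B = e b"
  have steep: "\<bar>fst A\<bar> \<le> snd A" "\<bar>fst B\<bar> \<le> snd B"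
    using edges[of a] edges[of b] ab by (auto simp: A_def B_def steep_def)
  obtain i u where i: "i \<in> {1..n}" and u: "u \<in> {0..1}"
    and g: "g = vertex (e \<circ> transpose a b) (i - 1) + u *\<^sub>R (e \<circ> transpose a b) i"
    using assms(9) unfolding mem_polyline_iff by blast
  note vertex' = vertex_comp_transpose[OF ab(1,2), of e "i - 1"]
  consider "i < a \<or> b < i" | "a < i \<and> i < b" | "i = a" | "i = b" by linarith
  then show ?thesis
  proof cases
    case 1
    then have "g = vertex e (i - 1) + u *\<^sub>R e i"
      using g vertex' ab by (auto simp: Transposition.transpose_def)
    then have "g \<in> polyline n e" using polyline_memI[OF i u] by simp
    then show ?thesis by (intro bexI[of _ g]) auto
  next
    case 2
    define p where "p = vertex e (i - 1) + u *\<^sub>R e i"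
    have "p \<in> polyline n e" using polyline_memI[OF i u] by (simp add: p_def)
    moreover have "g = p + (B - A)"
      using g vertex' 2 by (auto simp: p_def A_def B_def Transposition.transpose_def)
    ultimately show ?thesis using gap by (intro bexI[of _ p]) (auto simp: A_def B_def)
  next
    case 3
    then have g: "g = vertex e (a - 1) + u *\<^sub>R B"
      using g vertex' ab(1) by (auto simp: B_def)
    obtain v where v: "v \<in> {0..1}" "\<bar>u * snd B - v * snd A\<bar> \<le> u * fst B - v * fst A"
      using scaled_difference_rightward[of B A u] steep pos slope gap u by (auto simp: A_def B_def)
    have "vertex e (a - 1) + v *\<^sub>R A \<in> polyline n e"
      unfolding A_def using ab v by (intro polyline_memI) auto
    then show ?thesis using v by (intro bexI) (auto simp: g)
  next
    case 4
    \<comment> \<open>the mirror image, under x \<mapsto> -x, of the case i = a\<close>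
    then have g: "g = vertex e (b - 1) + (B - A) + u *\<^sub>R A"
      using g vertex' ab by (auto simp: A_def B_def)
    have "\<bar>snd A - snd B\<bar> \<le> - fst A - - fst B"
      using gap by (simp add: A_def B_def abs_minus_commute)
    then obtain v where v: "v \<in> {0..1}"
      "\<bar>(1 - u) * snd A - v * snd B\<bar> \<le> v * fst B - (1 - u) * fst A"
      using scaled_difference_rightward[of "(- fst A, snd A)" "(- fst B, snd B)" "1 - u"]
        steep pos slope u by (auto simp: A_def B_def)
    have "vertex e (b - 1) + (1 - v) *\<^sub>R B \<in> polyline n e"
      unfolding B_def using ab v by (intro polyline_memI) auto
    then show ?thesis using v by (intro bexI) (auto simp: g algebra_simps)
  qed
qed

lemma Hx_polyline_transpose_le:
  assumes edges: "\<And>j. j \<in> {1..n} \<Longrightarrow> steep (e j)" and ab: "1 \<le> a" "a < b" "b \<le> n"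
    and pos: "0 < snd (e a)" "0 < snd (e b)"
    and slope: "fst (e a) * snd (e b) \<le> fst (e b) * snd (e a)"
    and gap: "\<bar>snd (e b) - snd (e a)\<bar> \<le> fst (e b) - fst (e a)"
    and y: "0 \<le> y" "y \<le> snd (vertex e n)"
  shows "Hx (polyline n e) y \<le> Hx (polyline n (e \<circ> transpose a b)) y"
proof -
  have edges': "steep ((e \<circ> transpose a b) j)" if "j \<in> {1..n}" for j
    using that ab by (auto intro!: edges simp: Transposition.transpose_def)
  have "vertex (e \<circ> transpose a b) n = vertex e n"
    using vertex_comp_transpose[OF ab(1,2)] ab(3) by simp
  then obtain x' where g: "(x', y) \<in> polyline n (e \<circ> transpose a b)"
    using polyline_height_exists[of n y "e \<circ> transpose a b"] ab y by auto
  obtain x where f: "(x, y) \<in> polyline n e"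
    using polyline_height_exists[of n y e] ab y by auto
  obtain p where p: "p \<in> polyline n e" "\<bar>y - snd p\<bar> \<le> x' - fst p"
    using polyline_transpose_right_of[OF edges ab pos slope gap g] by auto
  have "\<bar>x - fst p\<bar> \<le> \<bar>y - snd p\<bar>"
    using steep_polyline_lipschitz[OF edges f p(1)] by simp
  then have "x \<le> x'" using p(2) by linarith
  then show ?thesis using Hx_polyline_eq[OF edges f] Hx_polyline_eq[OF edges' g] by simp
qed

section \<open>Borders for \<alpha> = \<pi>/4\<close>

lemma abs_cos_le_sin:
  assumes "pi / 4 \<le> t" "t \<le> 3 * pi / 4"
  shows "\<bar>cos t\<bar> \<le> sin t"
proof -
  have sin_shift: "sin (t - pi / 4) = sqrt 2 / 2 * (sin t - cos t)"
    by (simp add: sin_diff sin_45 cos_45 algebra_simps)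
  have cos_shift: "cos (t - pi / 4) = sqrt 2 / 2 * (cos t + sin t)"
    by (simp add: cos_diff sin_45 cos_45 algebra_simps)
  have "0 \<le> sin (t - pi / 4)" "0 \<le> cos (t - pi / 4)"
    using assms by (auto intro!: sin_ge_zero cos_ge_zero)
  then have "0 \<le> sin t - cos t" "0 \<le> cos t + sin t"
    unfolding sin_shift cos_shift by (simp_all add: zero_le_mult_iff)
  then show ?thesis by linarith
qed

lemma abs_sin_diff_le_cos_diff:
  assumes "pi / 4 \<le> s" "s \<le> t" "t \<le> 3 * pi / 4"
  shows "\<bar>sin t - sin s\<bar> \<le> cos s - cos t"
proof -
  have half_diff: "0 \<le> sin ((t - s) / 2)" using assms by (intro sin_ge_zero) auto
  have "\<bar>sin t - sin s\<bar> = 2 * sin ((t - s) / 2) * \<bar>cos ((t + s) / 2)\<bar>"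
    using half_diff by (simp add: sin_diff_sin abs_mult)
  also have "\<dots> \<le> 2 * sin ((t - s) / 2) * sin ((t + s) / 2)"
    using half_diff assms by (intro mult_left_mono abs_cos_le_sin) auto
  also have "\<dots> = cos s - cos t"
    using cos_diff_cos[of s t] by (simp add: add.commute)
  finally show ?thesis .
qed

lemma sin_mult_cos_le_cos_mult_sin:
  fixes s t :: real
  assumes "s \<le> t" "t \<le> s + pi"
  shows "sin s * cos t \<le> cos s * sin t"
proof -
  have "0 \<le> sin (t - s)" using assms by (intro sin_ge_zero) auto
  then show ?thesis by (simp add: sin_diff algebra_simps)
qed

lemma theta_mono:
  assumes "\<alpha> \<le> pi / 2" "k \<le> m"
  shows "theta n \<alpha> k \<le> theta n \<alpha> m"
  unfolding theta_def using assms
  by (auto intro!: divide_right_mono mult_right_mono)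

lemma theta_bounds:
  assumes "\<alpha> \<le> pi / 2" "k \<in> {1..n}"
  shows "\<alpha> \<le> theta n \<alpha> k" "theta n \<alpha> k \<le> pi - \<alpha>"
proof -
  have "theta n \<alpha> 1 = \<alpha>" by (simp add: theta_def)
  then show "\<alpha> \<le> theta n \<alpha> k" using theta_mono[OF assms(1), of 1 k n] assms(2) by simp
  have "theta n \<alpha> n \<le> pi - \<alpha>"
    using assms by (cases "n = 1") (auto simp: theta_def)
  then show "theta n \<alpha> k \<le> pi - \<alpha>" using theta_mono[OF assms(1), of k n n] assms(2) by simp
qed

lemma snd_beta_pos:
  assumes "0 < \<alpha>" "\<alpha> \<le> pi / 2" "k \<in> {1..n}"
  shows "0 < snd (beta n \<alpha> k)"
  using theta_bounds[OF assms(2,3)] assms(1) by (auto simp: beta_def intro!: sin_gt_zero)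

lemma beta_slope:
  assumes "0 \<le> \<alpha>" "\<alpha> \<le> pi / 2" "k \<in> {1..n}" "m \<in> {1..n}" "k \<le> m"
  shows "fst (beta n \<alpha> k) * snd (beta n \<alpha> m) \<le> fst (beta n \<alpha> m) * snd (beta n \<alpha> k)"
proof -
  have "theta n \<alpha> k \<le> theta n \<alpha> m" "theta n \<alpha> m \<le> theta n \<alpha> k + pi"
    using theta_mono[OF assms(2,5)] theta_bounds[OF assms(2,3)] theta_bounds[OF assms(2,4)]
      assms(1) by auto
  then show ?thesis
    using sin_mult_cos_le_cos_mult_sin by (simp add: beta_def mult.commute)
qed

lemma steep_beta_quarter_pi:
  assumes "k \<in> {1..n}"
  shows "steep (beta n (pi / 4) k)"
  using theta_bounds[of "pi / 4" k n] assms
  by (auto simp: steep_def beta_def intro!: abs_cos_le_sin)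

lemma beta_gap_quarter_pi:
  assumes "k \<in> {1..n}" "m \<in> {1..n}" "k \<le> m"
  shows "\<bar>snd (beta n (pi / 4) m) - snd (beta n (pi / 4) k)\<bar>
    \<le> fst (beta n (pi / 4) m) - fst (beta n (pi / 4) k)"
  using theta_mono[of "pi / 4" k m n] theta_bounds[of "pi / 4" k n] theta_bounds[of "pi / 4" m n]
    assms abs_sin_diff_le_cos_diff
  by (auto simp: beta_def)

lemma border_eq_polyline: "border n \<alpha> w = polyline n (\<lambda>j. beta n \<alpha> (inv w j))"
  by (simp add: border_def polyline_def bpt_def vertex_def)

lemma height_eq_vertex:
  assumes "w permutes {1..n}"
  shows "height n \<alpha> = snd (vertex (\<lambda>j. beta n \<alpha> (inv w j)) n)"
proof -
  have "bij_betw (inv w) {1..n} {1..n}"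
    using permutes_inv[OF assms] by (rule permutes_imp_bij)
  then have "(\<Sum>j = 1..n. sin (theta n \<alpha> (inv w j))) = (\<Sum>k = 1..n. sin (theta n \<alpha> k))"
    by (rule sum.reindex_bij_betw)
  then show ?thesis by (simp add: height_def vertex_def snd_sum beta_def)
qed

lemma precedes_transpose_comp:
  assumes w: "w permutes {1..n}" and ab: "a \<in> {1..n}" "b \<in> {1..n}" "a < b"
    and order: "inv w a < inv w b"
  shows "precedes n (pi / 4) w (transpose a b \<circ> w)"
  unfolding precedes_def
proof (intro allI impI)
  fix y assume y: "0 \<le> y \<and> y \<le> height n (pi / 4)"
  define e where "e = (\<lambda>j. beta n (pi / 4) (inv w j))"
  have inv_in: "\<And>j. j \<in> {1..n} \<Longrightarrow> inv w j \<in> {1..n}"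
    using permutes_in_image[OF permutes_inv[OF w]] by simp
  have "inv (transpose a b \<circ> w) = inv w \<circ> transpose a b"
    using permutes_bij[OF w] by (simp add: o_inv_distrib)
  then have edges': "(\<lambda>j. beta n (pi / 4) (inv (transpose a b \<circ> w) j)) = e \<circ> transpose a b"
    by (simp add: e_def fun_eq_iff)
  have "Hx (polyline n e) y \<le> Hx (polyline n (e \<circ> transpose a b)) y"
  proof (rule Hx_polyline_transpose_le)
    show "\<And>j. j \<in> {1..n} \<Longrightarrow> steep (e j)"
      using inv_in by (simp add: e_def steep_beta_quarter_pi)
    show "0 < snd (e a)" "0 < snd (e b)"
      using inv_in ab by (simp_all add: e_def snd_beta_pos)
    show "fst (e a) * snd (e b) \<le> fst (e b) * snd (e a)"
      using inv_in ab order by (simp add: e_def beta_slope)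
    show "\<bar>snd (e b) - snd (e a)\<bar> \<le> fst (e b) - fst (e a)"
      using inv_in ab order by (simp add: e_def beta_gap_quarter_pi)
    show "0 \<le> y" "y \<le> snd (vertex e n)"
      using y height_eq_vertex[OF w] by (simp_all add: e_def)
  qed (use ab in auto)
  then show "Hx (border n (pi / 4) w) y \<le> Hx (border n (pi / 4) (transpose a b \<circ> w)) y"
    unfolding border_eq_polyline edges' e_def[symmetric] .
qed

lemma precedes_trans:
  "precedes n \<alpha> u v \<Longrightarrow> precedes n \<alpha> v w \<Longrightarrow> precedes n \<alpha> u w"
  unfolding precedes_def by (meson order_trans)

lemma bruhat_step_precedes:
  assumes w: "w permutes {1..n}" and step: "bruhat_step n w w'"
  shows "w' permutes {1..n} \<and> precedes n (pi / 4) w w'"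
proof -
  obtain a b where ab: "a \<in> {1..n}" "b \<in> {1..n}" "a < b" and w': "w' = transpose a b \<circ> w"
    and "inv w a < inv w b"
    using bruhat_step_obtains_transpose[OF w step] .
  then have "precedes n (pi / 4) w w'" using precedes_transpose_comp[OF w] by simp
  moreover have "w' permutes {1..n}" using w ab by (simp add: w' permutes_compose permutes_swap_id)
  ultimately show ?thesis by simp
qed

theorem theorem1p4:
  fixes n :: nat and u v :: "nat \<Rightarrow> nat"
  assumes "n \<ge> 2"
    and "u permutes {1..n}" and "v permutes {1..n}"
    and "bruhat_less n u v"
  shows "precedes n (pi / 4) u v"
proof -
  have "v permutes {1..n} \<and> precedes n (pi / 4) u v"
    using assms(4) unfolding bruhat_less_def
  proof (induction rule: tranclp_induct)
    case (base v)
    then show ?case using bruhat_step_precedes[OF assms(2)] by simp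
  next
    case (step v w)
    then show ?case using bruhat_step_precedes[of v n w] precedes_trans by blast
  qed
  then show ?thesis by simp
qed

end
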